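(* For all positive integers $n,d$, $k(n+d)\le k(n)+\left\lceil \dfrac{d}{\lfloor\sqrt{n}\rfloor}\right\rceil$.
   Context: A system on $n$ elements is a triple $(\mathcal{F},w,s)$ where $\mathcal{F}=(F_1,\dots,F_m)$ is a collection of subsets of $[n]$, $w\in[0,1]^m$ with $\sum_i w_i=1$, and $s\in[0,1]^{m\times m\times n}$ with $\sum_p s_{ijp}=1$ for all $i,j$. It is intersecting if $s_{ijp}>0$ implies $p\in F_i\cap F_j$. It is balanced if for all $p\in[n]$, $\sum_{i,j} w_iw_js_{ijp}=1/n$. Its cardinality is the size of the largest set in $\mathcal{F}$. $k(n)$ is the minimum $k$ such that there exists a balanced intersecting system on $n$ elements with cardinality $k$. *)

theory Defs
  imports Complex_Main
begin

definition is_system :: "nat \<Rightarrow> nat \<Rightarrow> (nat \<Rightarrow> nat set) \<Rightarrow> (nat \<Rightarrow> real)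
    \<Rightarrow> (nat \<Rightarrow> nat \<Rightarrow> nat \<Rightarrow> real) \<Rightarrow> bool" where
  "is_system n m F w s \<longleftrightarrow>
     (\<forall>i<m. F i \<subseteq> {1..n}) \<and>
     (\<forall>i<m. 0 \<le> w i \<and> w i \<le> 1) \<and> (\<Sum>i<m. w i) = 1 \<and>
     (\<forall>i<m. \<forall>j<m. \<forall>p\<in>{1..n}. 0 \<le> s i j p \<and> s i j p \<le> 1) \<and>
     (\<forall>i<m. \<forall>j<m. (\<Sum>p=1..n. s i j p) = 1)"

definition is_intersecting :: "nat \<Rightarrow> nat \<Rightarrow> (nat \<Rightarrow> nat set)
    \<Rightarrow> (nat \<Rightarrow> nat \<Rightarrow> nat \<Rightarrow> real) \<Rightarrow> bool" where
  "is_intersecting n m F s \<longleftrightarrow>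
     (\<forall>i<m. \<forall>j<m. \<forall>p\<in>{1..n}. s i j p > 0 \<longrightarrow> p \<in> F i \<inter> F j)"

definition is_balanced :: "nat \<Rightarrow> nat \<Rightarrow> (nat \<Rightarrow> real)
    \<Rightarrow> (nat \<Rightarrow> nat \<Rightarrow> nat \<Rightarrow> real) \<Rightarrow> bool" where
  "is_balanced n m w s \<longleftrightarrow>
     (\<forall>p\<in>{1..n}. (\<Sum>i<m. \<Sum>j<m. w i * w j * s i j p) = 1 / real n)"

definition sys_cardinality :: "nat \<Rightarrow> (nat \<Rightarrow> nat set) \<Rightarrow> nat" where
  "sys_cardinality m F = Max (card ` F ` {..<m})"

definition k_fun :: "nat \<Rightarrow> nat" where
  "k_fun n = (LEAST k. \<exists>m F w s. is_system n m F w s \<and> is_intersecting n m F s \<and>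
                 is_balanced n m w s \<and> sys_cardinality m F = k)"

end

theory Submission
  imports Defs
begin

text \<open>Blow-up step: from a balanced intersecting system on \<open>[n]\<close> and \<open>e\<close> with
  \<open>e\<^sup>2 \<le> n + e\<close>, replace every set \<open>F\<^sub>i\<close> by the \<open>e\<close> copies \<open>F\<^sub>i \<union> {n + 1 + c}\<close>
  (\<open>c < e\<close>) of weight \<open>w\<^sub>i / e\<close>, the copy \<open>(i, c)\<close> having index \<open>i * e + c\<close>.
  Two copies with different new points keep the old distribution; two copies with the same
  new point send probability \<open>\<alpha> = e\<^sup>2 / (n + e)\<close> to it and \<open>1 - \<alpha>\<close> to the old
  distribution.  Each new point then receives mass \<open>\<alpha> / e\<^sup>2 = 1 / (n + e)\<close>, each old point
  \<open>(1 - \<alpha> / e) / n = 1 / (n + e)\<close>, and all sets grow by one element, so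
  \<open>k(n + e) \<le> k(n) + 1\<close>.  For \<open>r = \<lfloor>\<surd>n\<rfloor>\<close> the condition \<open>e\<^sup>2 \<le> n + e\<close> holds for every
  \<open>e \<le> r\<close> and stays true as \<open>n\<close> grows, so \<open>\<lceil>d / r\<rceil>\<close> steps of size at most \<open>r\<close> reach \<open>n + d\<close>.\<close>

lemma sum_lessThan_mult_div_mod:
  fixes f :: "nat \<Rightarrow> nat \<Rightarrow> 'a::comm_monoid_add"
  assumes "0 < e"
  shows "(\<Sum>q<m * e. f (q div e) (q mod e)) = (\<Sum>i<m. \<Sum>c<e. f i c)"
proof -
  have "(\<Sum>q<m * e. f (q div e) (q mod e)) = (\<Sum>(i, c)\<in>{..<m} \<times> {..<e}. f i c)"
  proof (rule sum.reindex_bij_witness[where i = "\<lambda>(i, c). i * e + c" and j = "\<lambda>q. (q div e, q mod e)"])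
    fix q assume "q \<in> {..<m * e}"
    then show "(q div e, q mod e) \<in> {..<m} \<times> {..<e}"
      using assms by (auto simp: less_mult_imp_div_less)
  next
    fix ic :: "nat \<times> nat" assume "ic \<in> {..<m} \<times> {..<e}"
    moreover have "i * e + c < m * e" if "i < m" "c < e" for i c
    proof -
      have "i * e + c < Suc i * e" using \<open>c < e\<close> by simp
      also have "\<dots> \<le> m * e" using \<open>i < m\<close> by (intro mult_le_mono1) simp
      finally show ?thesis .
    qed
    ultimately show "(\<lambda>(i, c). i * e + c) ic \<in> {..<m * e}" by auto
  qed (use assms in auto)
  then show ?thesis
    by (simp add: sum.cartesian_product)
qed

lemma sum_sum_lessThan_mult_div_mod:
  fixes A G :: "nat \<Rightarrow> nat \<Rightarrow> 'a::comm_semiring_1"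
  assumes "0 < e"
  shows "(\<Sum>q<m * e. \<Sum>q'<m * e. A (q div e) (q' div e) * G (q mod e) (q' mod e))
           = (\<Sum>i<m. \<Sum>j<m. A i j) * (\<Sum>c<e. \<Sum>c'<e. G c c')"
proof -
  have inner: "(\<Sum>q'<m * e. A a (q' div e) * G c (q' mod e)) = (\<Sum>j<m. \<Sum>c'<e. A a j * G c c')"
    for a c
    using sum_lessThan_mult_div_mod[OF assms, of "\<lambda>j c'. A a j * G c c'"] .
  have "(\<Sum>q<m * e. \<Sum>q'<m * e. A (q div e) (q' div e) * G (q mod e) (q' mod e))
      = (\<Sum>i<m. \<Sum>c<e. \<Sum>j<m. \<Sum>c'<e. A i j * G c c')"
    unfolding inner by (rule sum_lessThan_mult_div_mod[OF assms])
  also have "\<dots> = (\<Sum>i<m. \<Sum>j<m. \<Sum>c<e. \<Sum>c'<e. A i j * G c c')"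
    by (rule sum.cong[OF refl], rule sum.swap)
  also have "\<dots> = (\<Sum>i<m. \<Sum>j<m. A i j * (\<Sum>c<e. \<Sum>c'<e. G c c'))"
    by (simp only: sum_distrib_left)
  finally show ?thesis
    by (simp only: sum_distrib_right)
qed

definition blowup_sets :: "nat \<Rightarrow> nat \<Rightarrow> (nat \<Rightarrow> nat set) \<Rightarrow> nat \<Rightarrow> nat set" where
  "blowup_sets n e F q = insert (n + 1 + q mod e) (F (q div e))"

definition blowup_weights :: "nat \<Rightarrow> (nat \<Rightarrow> real) \<Rightarrow> nat \<Rightarrow> real" where
  "blowup_weights e w q = w (q div e) / real e"

definition blowup_choice :: "nat \<Rightarrow> nat \<Rightarrow> real \<Rightarrow> (nat \<Rightarrow> nat \<Rightarrow> nat \<Rightarrow> real)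
    \<Rightarrow> nat \<Rightarrow> nat \<Rightarrow> nat \<Rightarrow> real" where
  "blowup_choice n e \<alpha> s q q' p =
     (if p \<le> n then (if q mod e = q' mod e then 1 - \<alpha> else 1) * s (q div e) (q' div e) p
      else if q mod e = q' mod e \<and> p = n + 1 + q mod e then \<alpha> else 0)"

lemma sum_blowup_choice:
  assumes "0 < e" and "(\<Sum>p=1..n. s (q div e) (q' div e) p) = 1"
  shows "(\<Sum>p=1..n + e. blowup_choice n e \<alpha> s q q' p) = 1"
proof -
  have "{1..n + e} = {1..n} \<union> {n + 1..n + e}" by auto
  then have "(\<Sum>p=1..n + e. blowup_choice n e \<alpha> s q q' p)
      = (\<Sum>p=1..n. blowup_choice n e \<alpha> s q q' p) + (\<Sum>p=n + 1..n + e. blowup_choice n e \<alpha> s q q' p)"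
    by (simp add: sum.union_disjoint)
  also have "(\<Sum>p=1..n. blowup_choice n e \<alpha> s q q' p)
      = (if q mod e = q' mod e then 1 - \<alpha> else 1)"
    using assms(2) by (simp add: blowup_choice_def flip: sum_distrib_left)
  also have "(\<Sum>p=n + 1..n + e. blowup_choice n e \<alpha> s q q' p)
      = (\<Sum>p=n + 1..n + e. if q mod e = q' mod e \<and> p = n + 1 + q mod e then \<alpha> else 0)"
    by (intro sum.cong) (auto simp: blowup_choice_def)
  also have "\<dots> = (if q mod e = q' mod e then \<alpha> else 0)"
    using mod_less_divisor[OF \<open>0 < e\<close>, of q] by (simp add: sum.delta')
  finally show ?thesis by simp
qed

lemma is_system_blowup:
  assumes sys: "is_system n m F w s" and "0 < e" and "0 \<le> \<alpha>" and "\<alpha> \<le> 1"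
  shows "is_system (n + e) (m * e) (blowup_sets n e F) (blowup_weights e w) (blowup_choice n e \<alpha> s)"
  unfolding is_system_def
proof (intro conjI allI impI ballI)
  fix q assume "q < m * e"
  then have q: "q div e < m" "q mod e < e"
    using \<open>0 < e\<close> by (auto simp: less_mult_imp_div_less)
  with sys show "blowup_sets n e F q \<subseteq> {1..n + e}"
    unfolding is_system_def blowup_sets_def by fastforce
  from sys q show "0 \<le> blowup_weights e w q" "blowup_weights e w q \<le> 1"
    unfolding is_system_def blowup_weights_def by (auto simp: divide_le_eq_1)
  fix q' assume "q' < m * e"
  then have q': "q' div e < m"
    by (simp add: less_mult_imp_div_less)
  show "(\<Sum>p=1..n + e. blowup_choice n e \<alpha> s q q' p) = 1"
    using sys q q' \<open>0 < e\<close> by (intro sum_blowup_choice) (auto simp: is_system_def)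
  fix p assume "p \<in> {1..n + e}"
  with sys q q' assms(3,4)
  show "0 \<le> blowup_choice n e \<alpha> s q q' p" "blowup_choice n e \<alpha> s q q' p \<le> 1"
    unfolding is_system_def blowup_choice_def by (auto intro: mult_le_one)
next
  show "(\<Sum>q<m * e. blowup_weights e w q) = 1"
    using sys \<open>0 < e\<close>
    by (simp add: is_system_def blowup_weights_def sum_lessThan_mult_div_mod[where f = "\<lambda>i c. w i / real e"])
qed

lemma is_intersecting_blowup:
  assumes int: "is_intersecting n m F s" and "\<alpha> \<le> 1"
  shows "is_intersecting (n + e) (m * e) (blowup_sets n e F) (blowup_choice n e \<alpha> s)"
  unfolding is_intersecting_def
proof (intro allI impI ballI)
  fix q q' p
  assume q: "q < m * e" "q' < m * e" and p: "p \<in> {1..n + e}"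
    and pos: "0 < blowup_choice n e \<alpha> s q q' p"
  show "p \<in> blowup_sets n e F q \<inter> blowup_sets n e F q'"
  proof (cases "p \<le> n")
    case True
    with pos \<open>\<alpha> \<le> 1\<close> have "0 < s (q div e) (q' div e) p"
      by (auto simp: blowup_choice_def zero_less_mult_iff split: if_splits)
    moreover have "q div e < m" "q' div e < m"
      using q by (simp_all add: less_mult_imp_div_less)
    ultimately show ?thesis
      using int p True by (auto simp: is_intersecting_def blowup_sets_def)
  next
    case False
    with pos show ?thesis
      by (auto simp: blowup_choice_def blowup_sets_def split: if_splits)
  qed
qed

lemma is_balanced_blowup:
  assumes sys: "is_system n m F w s" and bal: "is_balanced n m w s" and "0 < e"
    and \<alpha>: "\<alpha> = real (e * e) / real (n + e)"
  shows "is_balanced (n + e) (m * e) (blowup_weights e w) (blowup_choice n e \<alpha> s)"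
  unfolding is_balanced_def
proof
  fix p assume p: "p \<in> {1..n + e}"
  let ?b = "\<lambda>q q'. blowup_weights e w q * blowup_weights e w q' * blowup_choice n e \<alpha> s q q' p"
  show "(\<Sum>q<m * e. \<Sum>q'<m * e. ?b q q') = 1 / real (n + e)"
  proof (cases "p \<le> n")
    case True
    define G where "G c c' = (if c = c' then 1 - \<alpha> else 1) / (real e * real e)" for c c' :: nat
    have "?b q q' = w (q div e) * w (q' div e) * s (q div e) (q' div e) p * G (q mod e) (q' mod e)"
      for q q'
      using True by (simp add: blowup_weights_def blowup_choice_def G_def)
    then have "(\<Sum>q<m * e. \<Sum>q'<m * e. ?b q q')
        = (\<Sum>i<m. \<Sum>j<m. w i * w j * s i j p) * (\<Sum>c<e. \<Sum>c'<e. G c c')"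
      using sum_sum_lessThan_mult_div_mod[OF \<open>0 < e\<close>] by simp
    also have "(\<Sum>i<m. \<Sum>j<m. w i * w j * s i j p) = 1 / real n"
      using bal p True by (simp add: is_balanced_def)
    also have "(\<Sum>c<e. \<Sum>c'<e. G c c') = (\<Sum>c<e. (real e - \<alpha>) / (real e * real e))"
    proof (rule sum.cong[OF refl])
      fix c assume "c \<in> {..<e}"
      then have "(\<Sum>c'<e. 1 - (if c = c' then \<alpha> else 0)) = real e - \<alpha>"
        by (simp add: sum_subtractf)
      moreover have "(if c = c' then 1 - \<alpha> else 1) = 1 - (if c = c' then \<alpha> else 0)" for c'
        by simp
      ultimately show "(\<Sum>c'<e. G c c') = (real e - \<alpha>) / (real e * real e)"
        unfolding G_def by (simp add: sum_divide_distrib[symmetric])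
    qed
    also have "real e - \<alpha> = real e * real n / real (n + e)"
      using \<open>0 < e\<close> by (simp add: \<alpha> field_simps)
    also have "1 / real n * (\<Sum>c<e. real e * real n / real (n + e) / (real e * real e))
        = 1 / real (n + e)"
      using True p \<open>0 < e\<close> by simp
    finally show ?thesis .
  next
    case False
    define c\<^sub>0 where "c\<^sub>0 = p - (n + 1)"
    have c\<^sub>0: "c\<^sub>0 < e" "p = n + 1 + c\<^sub>0"
      using p False by (auto simp: c\<^sub>0_def)
    define G where "G c c' = (if c = c\<^sub>0 then if c' = c\<^sub>0 then \<alpha> / (real e * real e) else 0 else 0)" for c c' :: nat
    have "?b q q' = w (q div e) * w (q' div e) * G (q mod e) (q' mod e)" for q q'
      using False c\<^sub>0 by (auto simp: blowup_weights_def blowup_choice_def G_def)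
    then have "(\<Sum>q<m * e. \<Sum>q'<m * e. ?b q q')
        = (\<Sum>i<m. \<Sum>j<m. w i * w j) * (\<Sum>c<e. \<Sum>c'<e. G c c')"
      using sum_sum_lessThan_mult_div_mod[OF \<open>0 < e\<close>] by simp
    also have "(\<Sum>i<m. \<Sum>j<m. w i * w j) = 1"
      using sys by (simp add: is_system_def flip: sum_product)
    also have "(\<Sum>c<e. \<Sum>c'<e. G c c') = (\<Sum>c<e. if c = c\<^sub>0 then \<alpha> / (real e * real e) else 0)"
      using c\<^sub>0 by (intro sum.cong refl) (simp add: G_def)
    also have "\<dots> = \<alpha> / (real e * real e)"
      using c\<^sub>0 by simp
    also have "1 * (\<alpha> / (real e * real e)) = 1 / real (n + e)"
      using \<open>0 < e\<close> by (simp add: \<alpha>)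
    finally show ?thesis .
  qed
qed

lemma div_image_lessThan_mult:
  fixes e m :: nat
  assumes "0 < e"
  shows "(\<lambda>q. q div e) ` {..<m * e} = {..<m}"
proof
  show "(\<lambda>q. q div e) ` {..<m * e} \<subseteq> {..<m}"
    by (simp add: image_subset_iff less_mult_imp_div_less)
  show "{..<m} \<subseteq> (\<lambda>q. q div e) ` {..<m * e}"
  proof
    fix i assume "i \<in> {..<m}"
    then have "i * e \<in> {..<m * e}" "i = i * e div e"
      using assms by auto
    then show "i \<in> (\<lambda>q. q div e) ` {..<m * e}" by blast
  qed
qed

lemma sys_cardinality_blowup:
  assumes sys: "is_system n m F w s" and "0 < e"
  shows "sys_cardinality (m * e) (blowup_sets n e F) = sys_cardinality m F + 1"
proof -
  have "{..<m} \<noteq> {}"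
    using sys by (intro notI) (simp add: is_system_def)
  have "card (blowup_sets n e F q) = card (F (q div e)) + 1" if "q < m * e" for q
  proof -
    have "F (q div e) \<subseteq> {1..n}"
      using sys that by (simp add: is_system_def less_mult_imp_div_less)
    then have "finite (F (q div e))" "n + 1 + q mod e \<notin> F (q div e)"
      by (auto intro: finite_subset)
    then show ?thesis by (simp add: blowup_sets_def)
  qed
  then have "card ` blowup_sets n e F ` {..<m * e} = (\<lambda>i. card (F i) + 1) ` (\<lambda>q. q div e) ` {..<m * e}"
    by (force simp: image_image)
  also have "\<dots> = (\<lambda>i. card (F i) + 1) ` {..<m}"
    using div_image_lessThan_mult[OF \<open>0 < e\<close>] by simp
  finally show ?thesis
    using Max_add_commute[OF finite_lessThan \<open>{..<m} \<noteq> {}\<close>, of "\<lambda>i. card (F i)" 1]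
    by (simp add: sys_cardinality_def image_image)
qed

definition has_balanced_intersecting_system :: "nat \<Rightarrow> nat \<Rightarrow> bool" where
  "has_balanced_intersecting_system n k \<longleftrightarrow>
     (\<exists>m F w s. is_system n m F w s \<and> is_intersecting n m F s \<and> is_balanced n m w s \<and>
                sys_cardinality m F = k)"

lemma k_fun_eq_Least: "k_fun n = (LEAST k. has_balanced_intersecting_system n k)"
  by (simp add: k_fun_def has_balanced_intersecting_system_def)

lemma has_balanced_intersecting_system_self:
  assumes "1 \<le> n"
  shows "has_balanced_intersecting_system n n"
proof -
  have "is_system n 1 (\<lambda>_. {1..n}) (\<lambda>_. 1) (\<lambda>_ _ _. 1 / real n)"
    using assms by (simp add: is_system_def)
  moreover have "is_intersecting n 1 (\<lambda>_. {1..n}) (\<lambda>_ _ _. 1 / real n)"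
    by (simp add: is_intersecting_def)
  moreover have "is_balanced n 1 (\<lambda>_. 1) (\<lambda>_ _ _. 1 / real n)"
    by (simp add: is_balanced_def)
  moreover have "sys_cardinality 1 (\<lambda>_. {1..n}) = n"
    by (simp add: sys_cardinality_def lessThan_Suc)
  ultimately show ?thesis
    unfolding has_balanced_intersecting_system_def by blast
qed

lemma has_balanced_intersecting_system_k_fun:
  assumes "1 \<le> n"
  shows "has_balanced_intersecting_system n (k_fun n)"
  unfolding k_fun_eq_Least
  by (rule LeastI) (rule has_balanced_intersecting_system_self[OF assms])

lemma k_fun_le:
  assumes "has_balanced_intersecting_system n k"
  shows "k_fun n \<le> k"
  unfolding k_fun_eq_Least using assms by (rule Least_le)

lemma has_balanced_intersecting_system_add:
  assumes "has_balanced_intersecting_system n k" and "0 < e" and "e * e \<le> n + e"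
  shows "has_balanced_intersecting_system (n + e) (k + 1)"
proof -
  obtain m F w s where sys: "is_system n m F w s" and int: "is_intersecting n m F s"
    and bal: "is_balanced n m w s" and card: "sys_cardinality m F = k"
    using assms(1) unfolding has_balanced_intersecting_system_def by blast
  define \<alpha> where "\<alpha> = real (e * e) / real (n + e)"
  have "real (e * e) \<le> real (n + e)"
    using assms(3) by (simp only: of_nat_le_iff)
  then have "0 \<le> \<alpha>" "\<alpha> \<le> 1"
    using assms(2) by (simp_all add: \<alpha>_def divide_le_eq_1)
  then show ?thesis
    unfolding has_balanced_intersecting_system_def
    using is_system_blowup[OF sys \<open>0 < e\<close>] is_intersecting_blowup[OF int]
      is_balanced_blowup[OF sys bal \<open>0 < e\<close> \<alpha>_def] sys_cardinality_blowup[OF sys \<open>0 < e\<close>] card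
    by blast
qed

lemma k_fun_add_le:
  assumes "1 \<le> n" and "0 < e" and "e * e \<le> n + e"
  shows "k_fun (n + e) \<le> k_fun n + 1"
  using has_balanced_intersecting_system_add[OF has_balanced_intersecting_system_k_fun[OF assms(1)] assms(2,3)]
  by (rule k_fun_le)

lemma k_fun_add_le_of_le_mult:
  assumes "1 \<le> n" and "r * r \<le> n" and "d \<le> q * r"
  shows "k_fun (n + d) \<le> k_fun n + q"
  using assms
proof (induction q arbitrary: n d)
  case 0
  then show ?case by simp
next
  case (Suc q)
  show ?case
  proof (cases "d \<le> r")
    case True
    with Suc.prems have "d * d \<le> n + d"
      using mult_le_mono[OF True True] by linarith
    with Suc.prems show ?thesis
      using k_fun_add_le[of n d] by (cases "d = 0") auto
  next
    case False
    have "k_fun (n + r + (d - r)) \<le> k_fun (n + r) + q"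
      using Suc.IH[of "n + r" "d - r"] Suc.prems by simp
    moreover have "0 < r"
      using False Suc.prems by (cases "r = 0") auto
    with Suc.prems have "k_fun (n + r) \<le> k_fun n + 1"
      using k_fun_add_le[of n r] by simp
    ultimately show ?thesis
      using False by simp
  qed
qed

lemma nat_floor_sqrt_mult_self_le: "nat \<lfloor>sqrt (real n)\<rfloor> * nat \<lfloor>sqrt (real n)\<rfloor> \<le> n"
proof -
  define r where "r = nat \<lfloor>sqrt (real n)\<rfloor>"
  have "real r \<le> sqrt (real n)"
    by (simp add: r_def)
  then have "real r ^ 2 \<le> real n"
    by (intro sqrt_ge_absD) simp
  then have "real (r * r) \<le> real n"
    by (simp only: of_nat_mult power2_eq_square)
  then show ?thesis
    unfolding r_def[symmetric] by (simp only: of_nat_le_iff)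
qed

lemma le_nat_ceiling_divide_mult:
  assumes "0 < r"
  shows "d \<le> nat \<lceil>real d / real r\<rceil> * r"
proof -
  define q where "q = nat \<lceil>real d / real r\<rceil>"
  have "real d / real r \<le> of_int \<lceil>real d / real r\<rceil>"
    by (rule le_of_int_ceiling)
  also have "\<dots> = real q"
    by (simp add: q_def)
  finally have "real d \<le> real q * real r"
    using assms by (simp add: pos_divide_le_eq)
  then have "real d \<le> real (q * r)"
    by (simp only: of_nat_mult)
  then show ?thesis
    unfolding q_def[symmetric] by (simp only: of_nat_le_iff)
qed

theorem corollary1:
  fixes n d :: nat
  assumes "n \<ge> 1" and "d \<ge> 1"
  shows "real (k_fun (n + d)) \<le>
           real (k_fun n) + of_int \<lceil>real d / of_int \<lfloor>sqrt (real n)\<rfloor>\<rceil>"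
proof -
  define r where "r = nat \<lfloor>sqrt (real n)\<rfloor>"
  define q where "q = nat \<lceil>real d / real r\<rceil>"
  have "0 < r"
    using assms(1) by (simp add: r_def)
  then have "k_fun (n + d) \<le> k_fun n + q"
    using k_fun_add_le_of_le_mult[OF assms(1) nat_floor_sqrt_mult_self_le le_nat_ceiling_divide_mult]
    unfolding r_def q_def by blast
  moreover have "of_int \<lfloor>sqrt (real n)\<rfloor> = real r" "of_int \<lceil>real d / real r\<rceil> = real q"
    using assms(1) by (simp_all add: r_def q_def)
  ultimately show ?thesis
    by (simp flip: of_nat_le_iff)
qed

end
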